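(* Let $1<p\le\infty$ and $m\in\mathbb N_0$. Let $\varphi\in C_0^k(\mathbb R)$ with $\operatorname{supp}\varphi\subset[0,1]$, $\varphi>0$ on $(0,1)$, and $k>\frac{mp}{p-1}+1$ (read as $k>m+1$ if $p=\infty$), and assume that $\varphi^{(k)}$ has only finitely many zeros in $[0,1]$. Then for all $0\le n\le m$, $$\frac{|\varphi^{(n)}(t)|}{|\varphi(t)|^{1/p}}\in L_\infty([0,1]).$$
   Context: $C_0^k(\mathbb R)$: compactly supported functions whose derivatives up to order $k$ are uniformly continuous. *)

theory Defs
  imports "HOL-Analysis.Analysis"
begin

definition nderiv :: "nat \<Rightarrow> (real \<Rightarrow> real) \<Rightarrow> real \<Rightarrow> real" where
  "nderiv j f = (deriv ^^ j) f"

definition C0k :: "nat \<Rightarrow> (real \<Rightarrow> real) \<Rightarrow> bool" where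
  "C0k k f \<longleftrightarrow>
     compact (closure {x. f x \<noteq> 0}) \<and>
     (\<forall>j<k. nderiv j f differentiable_on UNIV) \<and>
     (\<forall>j\<le>k. uniformly_continuous_on UNIV (nderiv j f))"

definition L_infty_on :: "real set \<Rightarrow> (real \<Rightarrow> real) \<Rightarrow> bool" where
  "L_infty_on S f \<longleftrightarrow>
     f \<in> borel_measurable (restrict_space lborel S) \<and>
     (\<exists>C. AE x in lborel. x \<in> S \<longrightarrow> \<bar>f x\<bar> \<le> C)"

end

theory Submission
  imports Defs
begin

(* Near 0 all derivatives of order below k vanish and the k-th one, having
   finitely many zeros, keeps a sign on some (0, e]; since phi > 0 there, that
   sign is positive, and integrating upwards makes f_j = phi^(j), j <= L = k - 1,
   positive and increasing on (0, e]. For such a chain the one-sided Landau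
   inequality f_(i+1)^2 <= 2 f_i f_(i+2) holds, i.e. i |-> ln f_i + i^2 ln 2 / 2
   is convex on {0..L}, and the chord inequality for this convex sequence gives
   |phi^(n)|^L <= K phi^(L-n). The same holds near 1 after reflection, and in
   between phi is bounded below. Hence |phi^(n)| / phi^(1/p) <= K phi^((L-n)/L - 1/p),
   which is bounded since (L-n)/L >= 1/p is exactly the hypothesis on k. *)

lemma midpoint_convex_seq_le_chord:
  fixes c :: "nat \<Rightarrow> real"
  assumes convex: "\<And>i. Suc (Suc i) \<le> L \<Longrightarrow> 2 * c (Suc i) \<le> c i + c (Suc (Suc i))"
    and "j \<le> L"
  shows "real L * c j \<le> real (L - j) * c 0 + real j * c L"
proof -
  define d where "d i = c (Suc i) - c i" for i
  have d_mono: "d i \<le> d i'" if "i \<le> i'" "i' < L" for i i'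
    using that
  proof (induction i')
    case (Suc i')
    show ?case
    proof (cases "i = Suc i'")
      case False
      then have "d i \<le> d i'" using Suc by simp
      also have "d i' \<le> d (Suc i')" using convex[of i'] Suc.prems by (simp add: d_def)
      finally show ?thesis .
    qed simp
  qed simp
  have telescope: "(\<Sum>i'\<in>{j..<L}. d i') = c L - c j" "(\<Sum>i<j. d i) = c j - c 0"
    using sum_Suc_diff'[OF \<open>j \<le> L\<close>, of c] sum_lessThan_telescope[of c j] by (simp_all add: d_def)
  have "0 \<le> (\<Sum>i<j. \<Sum>i'\<in>{j..<L}. d i' - d i)"
    by (intro sum_nonneg) (simp add: d_mono)
  also have "\<dots> = real j * (c L - c j) - real (L - j) * (c j - c 0)"
    by (simp add: sum_subtractf telescope sum_distrib_left[symmetric])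
  finally show ?thesis using \<open>j \<le> L\<close> by (simp add: algebra_simps)
qed

lemma seq_power_interpolation:
  fixes a :: "nat \<Rightarrow> real" and C :: real
  assumes "0 < C" and pos: "\<And>i. i \<le> L \<Longrightarrow> 0 < a i"
    and ratio: "\<And>i. Suc (Suc i) \<le> L \<Longrightarrow> a (Suc i) ^ 2 \<le> C * a i * a (Suc (Suc i))"
    and "j \<le> L"
  shows "a j ^ L \<le> sqrt C ^ (L * j * (L - j)) * a 0 ^ (L - j) * a L ^ j"
proof -
  define c where "c i = ln (a i) + ln C / 2 * real i ^ 2" for i
  have c_convex: "2 * c (Suc i) \<le> c i + c (Suc (Suc i))" if "Suc (Suc i) \<le> L" for i
  proof -
    have "0 < a i" "0 < a (Suc i)" "0 < a (Suc (Suc i))"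
      using pos that by simp_all
    then have "ln (a (Suc i) ^ 2) \<le> ln (C * a i * a (Suc (Suc i)))"
      using ratio[OF that] \<open>0 < C\<close> by simp
    then have "2 * ln (a (Suc i)) \<le> ln C + ln (a i) + ln (a (Suc (Suc i)))"
      using \<open>0 < a i\<close> \<open>0 < a (Suc (Suc i))\<close> \<open>0 < C\<close> by (simp add: ln_mult ln_realpow)
    then show ?thesis by (simp add: c_def algebra_simps power2_eq_square)
  qed
  have "real L * ln (a j) \<le> ln C / 2 * real (L * j * (L - j)) + real (L - j) * ln (a 0) + real j * ln (a L)"
    using midpoint_convex_seq_le_chord[of L c, OF c_convex \<open>j \<le> L\<close>] \<open>j \<le> L\<close>
    by (simp add: c_def algebra_simps power2_eq_square)
  moreover have "0 < a 0" "0 < a j" "0 < a L"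
    using pos \<open>j \<le> L\<close> by simp_all
  ultimately have "ln (a j ^ L) \<le> ln (sqrt C ^ (L * j * (L - j)) * a 0 ^ (L - j) * a L ^ j)"
    using \<open>0 < C\<close> by (simp add: ln_mult ln_realpow ln_sqrt algebra_simps)
  then show ?thesis
    using \<open>0 < a 0\<close> \<open>0 < a j\<close> \<open>0 < a L\<close> \<open>0 < C\<close> by simp
qed

lemma landau_deriv_sq_le:
  fixes g g' g'' :: "real \<Rightarrow> real" and t :: real
  assumes "0 \<le> t"
    and g: "\<And>s. s \<in> {0..t} \<Longrightarrow> (g has_real_derivative g' s) (at s)"
    and g': "\<And>s. s \<in> {0..t} \<Longrightarrow> (g' has_real_derivative g'' s) (at s)"
    and g_nonneg: "\<And>s. s \<in> {0..t} \<Longrightarrow> 0 \<le> g s"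
    and "g' 0 = 0" "0 \<le> g' t" "0 < g'' t"
    and g''_max: "\<And>s. s \<in> {0..t} \<Longrightarrow> g'' s \<le> g'' t"
  shows "g' t ^ 2 \<le> 2 * g t * g'' t"
proof -
  define x \<sigma> where "x = g' t" and "\<sigma> = g'' t"
  have slope: "x - \<sigma> * (t - s) \<le> g' s" if "s \<in> {0..t}" for s
  proof -
    have "\<sigma> * s - g' s \<le> \<sigma> * t - g' t"
    proof (rule deriv_nonneg_imp_mono[where g = "\<lambda>y. \<sigma> * y - g' y" and g' = "\<lambda>y. \<sigma> - g'' y"])
      fix y assume "y \<in> {s..t}"
      then show "((\<lambda>y. \<sigma> * y - g' y) has_real_derivative \<sigma> - g'' y) (at y)"
          and "0 \<le> \<sigma> - g'' y"
        using that g' g''_max by (auto intro!: derivative_eq_intros simp: \<sigma>_def)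
    qed (use that in simp)
    then show ?thesis by (simp add: x_def algebra_simps)
  qed
  define \<tau> where "\<tau> = t - x / \<sigma>"
  have "0 < \<sigma>" "0 \<le> x" using assms by (simp_all add: x_def \<sigma>_def)
  moreover have "x \<le> \<sigma> * t" using slope[of 0] \<open>0 \<le> t\<close> \<open>g' 0 = 0\<close> by simp
  ultimately have \<tau>: "\<tau> \<in> {0..t}" by (auto simp: \<tau>_def field_simps)
  have "g \<tau> - x * \<tau> - \<sigma> * (t - \<tau>)^2 / 2 \<le> g t - x * t - \<sigma> * (t - t)^2 / 2"
  proof (rule deriv_nonneg_imp_mono[where g = "\<lambda>y. g y - x * y - \<sigma> * (t - y)^2 / 2"
        and g' = "\<lambda>y. g' y - x + \<sigma> * (t - y)"])
    fix y assume y: "y \<in> {\<tau>..t}"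
    with \<tau> show "((\<lambda>y. g y - x * y - \<sigma> * (t - y)^2 / 2) has_real_derivative g' y - x + \<sigma> * (t - y)) (at y)"
      by (auto intro!: derivative_eq_intros g simp: field_simps power2_eq_square)
    show "0 \<le> g' y - x + \<sigma> * (t - y)" using slope[of y] y \<tau> by simp
  qed (use \<tau> in simp)
  moreover have "0 \<le> g \<tau>" using g_nonneg \<tau> .
  ultimately have "x * (x / \<sigma>) - \<sigma> * (x / \<sigma>)^2 / 2 \<le> g t"
    by (simp add: \<tau>_def algebra_simps)
  with \<open>0 < \<sigma>\<close> show ?thesis
    by (simp add: x_def \<sigma>_def field_simps power2_eq_square)
qed

locale derivative_chain =
  fixes f :: "nat \<Rightarrow> real \<Rightarrow> real" and L :: nat and \<epsilon> :: real
  assumes has_deriv: "\<And>j s. j \<le> L \<Longrightarrow> s \<in> {0..\<epsilon>} \<Longrightarrow> (f j has_real_derivative f (Suc j) s) (at s)"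
    and vanish_0: "\<And>j. j \<le> L \<Longrightarrow> f j 0 = 0"
    and top_nonneg: "\<And>s. s \<in> {0<..\<epsilon>} \<Longrightarrow> 0 \<le> f (Suc L) s"
begin

lemma mono_if_next_nonneg:
  assumes "j \<le> L" "0 \<le> s" "s \<le> t" "t \<le> \<epsilon>" "\<And>y. s < y \<Longrightarrow> y < t \<Longrightarrow> 0 \<le> f (Suc j) y"
  shows "f j s \<le> f j t"
proof (rule DERIV_nonneg_imp_increasing_open[where f = "f j"])
  fix y assume "s < y" "y < t"
  with assms show "\<exists>d. (f j has_real_derivative d) (at y) \<and> 0 \<le> d"
    by (intro exI[of _ "f (Suc j) y"]) (auto intro: has_deriv)
next
  show "continuous_on {s..t} (f j)"
    using assms by (intro continuous_at_imp_continuous_on ballI DERIV_isCont[OF has_deriv]) auto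
qed (use assms in simp)

lemma nonneg: "j \<le> Suc L \<Longrightarrow> s \<in> {0<..\<epsilon>} \<Longrightarrow> 0 \<le> f j s"
proof (induction j arbitrary: s rule: inc_induct)
  case base
  then show ?case using top_nonneg by simp
next
  case (step j)
  then have "f j 0 \<le> f j s" by (intro mono_if_next_nonneg) auto
  with step vanish_0 show ?case by simp
qed

lemma mono: "j \<le> L \<Longrightarrow> 0 \<le> s \<Longrightarrow> s \<le> t \<Longrightarrow> t \<le> \<epsilon> \<Longrightarrow> f j s \<le> f j t"
  by (rule mono_if_next_nonneg) (auto intro: nonneg)

lemma le_mult_next:
  assumes "j < L" "s \<in> {0..\<epsilon>}"
  shows "f j s \<le> s * f (Suc j) s"
proof -
  have "0 * f (Suc j) s - f j 0 \<le> s * f (Suc j) s - f j s"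
  proof (rule deriv_nonneg_imp_mono[where g = "\<lambda>y. y * f (Suc j) s - f j y"
        and g' = "\<lambda>y. f (Suc j) s - f (Suc j) y"])
    fix y assume "y \<in> {0..s}"
    with assms show "((\<lambda>y. y * f (Suc j) s - f j y) has_real_derivative f (Suc j) s - f (Suc j) y) (at y)"
        and "0 \<le> f (Suc j) s - f (Suc j) y"
      by (auto intro!: derivative_eq_intros has_deriv mono)
  qed (use assms in simp)
  with assms vanish_0 show ?thesis by simp
qed

end

locale positive_derivative_chain = derivative_chain +
  assumes pos_0: "\<And>s. s \<in> {0<..\<epsilon>} \<Longrightarrow> 0 < f 0 s"
begin

lemma pos: "j \<le> L \<Longrightarrow> s \<in> {0<..\<epsilon>} \<Longrightarrow> 0 < f j s"
proof (induction j)
  case (Suc j)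
  then have "0 < s * f (Suc j) s" using le_mult_next[of j s] by force
  with Suc show ?case by (simp add: zero_less_mult_iff)
qed (use pos_0 in simp)

lemma landau:
  assumes "Suc (Suc i) \<le> L" "t \<in> {0<..\<epsilon>}"
  shows "f (Suc i) t ^ 2 \<le> 2 * f i t * f (Suc (Suc i)) t"
proof (rule landau_deriv_sq_le[where g = "f i" and g' = "f (Suc i)" and g'' = "f (Suc (Suc i))"])
  fix s assume "s \<in> {0..t}"
  with assms show "(f i has_real_derivative f (Suc i) s) (at s)"
    and "(f (Suc i) has_real_derivative f (Suc (Suc i)) s) (at s)"
    and "f (Suc (Suc i)) s \<le> f (Suc (Suc i)) t"
    by (auto intro!: has_deriv mono)
  from \<open>s \<in> {0..t}\<close> assms show "0 \<le> f i s"
    by (cases "s = 0") (auto simp: vanish_0 intro: nonneg)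
qed (use assms vanish_0 pos[of "Suc i" t] pos[of "Suc (Suc i)" t] in auto)

lemma power_bound:
  assumes "j \<le> L" "t \<in> {0<..\<epsilon>}"
  shows "f j t ^ L \<le> sqrt 2 ^ (L * j * (L - j)) * f L \<epsilon> ^ j * f 0 t ^ (L - j)"
proof -
  have "f j t ^ L \<le> sqrt 2 ^ (L * j * (L - j)) * f 0 t ^ (L - j) * f L t ^ j"
    using assms by (intro seq_power_interpolation[where a = "\<lambda>i. f i t"] landau pos) auto
  also have "\<dots> \<le> sqrt 2 ^ (L * j * (L - j)) * f 0 t ^ (L - j) * f L \<epsilon> ^ j"
    using assms pos[of 0 t] nonneg[of L t]
    by (intro mult_left_mono power_mono mono) auto
  finally show ?thesis by (simp add: algebra_simps)
qed

end

lemma constant_sign_near_0: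
  fixes g :: "real \<Rightarrow> real"
  assumes "0 < \<epsilon>0" "continuous_on {0..\<epsilon>0} g" "finite {s \<in> {0..\<epsilon>0}. g s = 0}"
  obtains \<epsilon> where "0 < \<epsilon>" "\<epsilon> \<le> \<epsilon>0" "(\<forall>s\<in>{0<..\<epsilon>}. 0 < g s) \<or> (\<forall>s\<in>{0<..\<epsilon>}. g s < 0)"
proof -
  obtain \<delta> where "0 < \<delta>" and \<delta>: "\<forall>s \<in> {s \<in> {0..\<epsilon>0}. g s = 0}. s \<noteq> 0 \<longrightarrow> \<delta> \<le> dist 0 s"
    using finite_set_avoid[OF assms(3), of 0] by blast
  define \<epsilon> where "\<epsilon> = min \<epsilon>0 (\<delta> / 2)"
  have nonzero: "g s \<noteq> 0" if "s \<in> {0<..\<epsilon>}" for s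
  proof
    assume "g s = 0"
    moreover have "s \<in> {0..\<epsilon>0}" "s < \<delta>" using that \<open>0 < \<delta>\<close> by (auto simp: \<epsilon>_def)
    ultimately show False using \<delta>[rule_format, of s] that by (simp add: dist_real_def)
  qed
  have "connected (g ` {0<..\<epsilon>})"
    by (rule connected_continuous_image[OF continuous_on_subset[OF assms(2)]]) (auto simp: \<epsilon>_def)
  then have no_sign_change: "\<not> (g a < 0 \<and> 0 < g b)" if "a \<in> {0<..\<epsilon>}" "b \<in> {0<..\<epsilon>}" for a b
    using connectedD_interval[of "g ` {0<..\<epsilon>}" "g a" "g b" 0] nonzero that by force
  show ?thesis
  proof (rule that)
    show "0 < \<epsilon>" "\<epsilon> \<le> \<epsilon>0" using assms(1) \<open>0 < \<delta>\<close> by (auto simp: \<epsilon>_def)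
    show "(\<forall>s\<in>{0<..\<epsilon>}. 0 < g s) \<or> (\<forall>s\<in>{0<..\<epsilon>}. g s < 0)"
      using no_sign_change nonzero by (meson linorder_neqE_linordered_idom)
  qed
qed

lemma endpoint_power_bound:
  fixes f :: "nat \<Rightarrow> real \<Rightarrow> real" and L n :: nat and \<epsilon>0 :: real
  assumes "0 < \<epsilon>0"
    and has_deriv: "\<And>j s. j \<le> L \<Longrightarrow> s \<in> {0..\<epsilon>0} \<Longrightarrow> (f j has_real_derivative f (Suc j) s) (at s)"
    and vanish_0: "\<And>j. j \<le> L \<Longrightarrow> f j 0 = 0"
    and top_continuous: "continuous_on {0..\<epsilon>0} (f (Suc L))"
    and top_zeros: "finite {s \<in> {0..\<epsilon>0}. f (Suc L) s = 0}"
    and pos_0: "\<And>s. s \<in> {0<..\<epsilon>0} \<Longrightarrow> 0 < f 0 s"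
    and "n \<le> L"
  obtains \<epsilon> K where "0 < \<epsilon>" "\<epsilon> \<le> \<epsilon>0" "\<And>t. t \<in> {0<..\<epsilon>} \<Longrightarrow> \<bar>f n t\<bar> ^ L \<le> K * f 0 t ^ (L - n)"
proof -
  obtain \<epsilon> where \<epsilon>: "0 < \<epsilon>" "\<epsilon> \<le> \<epsilon>0"
    and sign: "(\<forall>s\<in>{0<..\<epsilon>}. 0 < f (Suc L) s) \<or> (\<forall>s\<in>{0<..\<epsilon>}. f (Suc L) s < 0)"
    using constant_sign_near_0[OF \<open>0 < \<epsilon>0\<close> top_continuous top_zeros] by blast
  from sign show ?thesis
  proof
    assume "\<forall>s\<in>{0<..\<epsilon>}. 0 < f (Suc L) s"
    then interpret positive_derivative_chain f L \<epsilon>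
      by unfold_locales (use \<epsilon> has_deriv vanish_0 pos_0 in \<open>auto simp: less_imp_le\<close>)
    show ?thesis
    proof (rule that[OF \<epsilon>])
      fix t assume "t \<in> {0<..\<epsilon>}"
      then show "\<bar>f n t\<bar> ^ L \<le> (sqrt 2 ^ (L * n * (L - n)) * f L \<epsilon> ^ n) * f 0 t ^ (L - n)"
        using power_bound[of n t] nonneg[of n t] \<open>n \<le> L\<close> by simp
    qed
  next
    \<comment> \<open>A negative top derivative would make every lower one, down to \<open>f 0\<close> itself, nonpositive.\<close>
    assume "\<forall>s\<in>{0<..\<epsilon>}. f (Suc L) s < 0"
    then interpret negated: derivative_chain "\<lambda>j s. - f j s" L \<epsilon>
      by unfold_locales
        (use \<epsilon> vanish_0 in \<open>auto intro!: derivative_eq_intros has_deriv simp: less_imp_le\<close>)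
    have "f 0 \<epsilon> \<le> 0" using negated.nonneg[of 0 \<epsilon>] \<epsilon> by simp
    with pos_0[of \<epsilon>] \<epsilon> show ?thesis by simp
  qed
qed

lemma nderiv_0 [simp]: "nderiv 0 f = f"
  by (simp add: nderiv_def)

lemma nderiv_Suc: "nderiv (Suc j) f = deriv (nderiv j f)"
  by (simp add: nderiv_def)

lemma L_infty_on_if_bounded:
  assumes "h \<in> borel_measurable borel" "\<And>t. t \<in> S \<Longrightarrow> \<bar>h t\<bar> \<le> C"
  shows "L_infty_on S h"
  unfolding L_infty_on_def using assms by (auto intro: measurable_restrict_space1)

lemma div_powr_le_of_power_le:
  fixes a b K B r :: real and L n :: nat
  assumes "0 \<le> a" "0 \<le> b" "b \<le> B" "0 \<le> K" and power_le: "a ^ L \<le> K * b ^ (L - n)"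
    and "0 < L" "n \<le> L" "0 < r" and exponent: "real L \<le> r * (real L - real n)"
  shows "a / b powr (1 / r) \<le> K powr (1 / L) * max 1 B powr ((real L - real n) / L - 1 / r)"
proof (cases "a = 0 \<or> b = 0")
  case False
  with assms have "0 < a" "0 < b" by auto
  define \<theta> where "\<theta> = (real L - real n) / L"
  have "1 / r \<le> \<theta>"
    using exponent \<open>0 < L\<close> \<open>0 < r\<close> by (simp add: \<theta>_def field_simps)
  have "a = (a ^ L) powr (1 / L)"
    using \<open>0 < a\<close> \<open>0 < L\<close> by (simp add: powr_realpow[symmetric] powr_powr)
  also have "\<dots> \<le> (K * b ^ (L - n)) powr (1 / L)"
    using power_le \<open>0 < a\<close> by (intro powr_mono2) auto
  also have "\<dots> = K powr (1 / L) * b powr \<theta>"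
    using \<open>0 < b\<close> \<open>0 \<le> K\<close> \<open>n \<le> L\<close>
    by (simp add: \<theta>_def powr_mult powr_realpow[symmetric] powr_powr)
  finally have "a / b powr (1 / r) \<le> K powr (1 / L) * b powr \<theta> / b powr (1 / r)"
    by (simp add: divide_right_mono)
  also have "\<dots> = K powr (1 / L) * b powr (\<theta> - 1 / r)"
    by (simp add: powr_diff)
  also have "\<dots> \<le> K powr (1 / L) * max 1 B powr (\<theta> - 1 / r)"
    using \<open>0 < b\<close> \<open>b \<le> B\<close> \<open>1 / r \<le> \<theta>\<close> by (intro mult_left_mono powr_mono2) auto
  finally show ?thesis by (simp add: \<theta>_def)
qed auto

lemma exponent_condition:
  fixes r :: real
  assumes "1 < r" and k: "real m * r / (r - 1) + 1 < real k" and "n \<le> m"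
  obtains L where "k = Suc L" "n < L" "real L \<le> r * (real L - real n)"
proof -
  have "0 \<le> real m * r / (r - 1)" using \<open>1 < r\<close> by simp
  with k obtain L where L: "k = Suc L" by (cases k) auto
  with k \<open>1 < r\<close> have "real m * r < real L * (r - 1)" by (simp add: field_simps)
  moreover have "real n * r \<le> real m * r" using \<open>1 < r\<close> \<open>n \<le> m\<close> by simp
  ultimately have "real n * r < real L * (r - 1)" by linarith
  have "n < L"
  proof (rule ccontr)
    assume "\<not> n < L"
    then have "real L * (r - 1) \<le> real n * r" using \<open>1 < r\<close> by (intro mult_mono) auto
    with \<open>real n * r < real L * (r - 1)\<close> show False by linarith
  qed
  moreover have "real L \<le> r * (real L - real n)"
    using \<open>real n * r < real L * (r - 1)\<close> by (simp add: algebra_simps)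
  ultimately show ?thesis using L that by blast
qed

locale bump =
  fixes k :: nat and \<phi> :: "real \<Rightarrow> real"
  assumes C0k: "C0k k \<phi>"
    and support: "closure {x. \<phi> x \<noteq> 0} \<subseteq> {0..1}"
    and positive: "\<And>t. t \<in> {0<..<1} \<Longrightarrow> 0 < \<phi> t"
    and finite_zeros: "finite {t \<in> {0..1}. nderiv k \<phi> t = 0}"
begin

lemma has_deriv: "j < k \<Longrightarrow> (nderiv j \<phi> has_real_derivative nderiv (Suc j) \<phi> x) (at x)"
  using C0k
  by (simp add: C0k_def nderiv_Suc DERIV_deriv_iff_real_differentiable differentiable_on_def)

lemma continuous: "j \<le> k \<Longrightarrow> continuous_on S (nderiv j \<phi>)"
  using C0k unfolding C0k_def
  by (metis continuous_on_subset subset_UNIV uniformly_continuous_imp_continuous)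

lemma measurable: "j \<le> k \<Longrightarrow> nderiv j \<phi> \<in> borel_measurable borel"
  by (intro borel_measurable_continuous_onI continuous)

lemma bounded_on_unit:
  assumes "j \<le> k"
  obtains B where "\<And>t. t \<in> {0..1} \<Longrightarrow> \<bar>nderiv j \<phi> t\<bar> \<le> B"
proof -
  have "bounded (nderiv j \<phi> ` {0..1})"
    by (intro compact_imp_bounded compact_continuous_image continuous assms) simp
  then obtain B where "\<forall>x\<in>nderiv j \<phi> ` {0..1}. \<bar>x\<bar> \<le> B"
    unfolding bounded_real by blast
  then have "\<forall>t\<in>{0..1}. \<bar>nderiv j \<phi> t\<bar> \<le> B" by simp
  with that show ?thesis by blast
qed

lemma vanish_outside: "x \<notin> {0..1} \<Longrightarrow> nderiv j \<phi> x = 0"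
proof (induction j arbitrary: x)
  case 0
  then show ?case using support closure_subset[of "{x. \<phi> x \<noteq> 0}"] by auto
next
  case (Suc j)
  have "(nderiv j \<phi> has_real_derivative 0) (at x)"
    by (rule has_field_derivative_transform_within_open[of "\<lambda>_. 0" _ _ "- {0..1}"])
      (use Suc in auto)
  then show ?case by (simp add: nderiv_Suc DERIV_imp_deriv)
qed

lemma vanish_off_interior: "j \<le> k \<Longrightarrow> x \<notin> {0<..<1} \<Longrightarrow> nderiv j \<phi> x = 0"
  by (rule continuous_constant_on_closure[of "- {0..1}"])
    (auto simp: closure_complement intro: continuous vanish_outside)

lemma nonneg: "0 \<le> \<phi> t"
  using positive[of t] vanish_off_interior[of 0 t] by (cases "t \<in> {0<..<1}") auto

lemma positive_lower_bound:
  assumes "0 < a" "b < 1"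
  obtains c where "0 < c" "\<And>t. t \<in> {a..b} \<Longrightarrow> c \<le> \<phi> t"
proof (cases "a \<le> b")
  case True
  then obtain t0 where t0: "t0 \<in> {a..b}" "\<And>t. t \<in> {a..b} \<Longrightarrow> \<phi> t0 \<le> \<phi> t"
    using continuous_attains_inf[of "{a..b}" \<phi>] continuous[of 0] by auto
  with assms show ?thesis by (intro that[of "\<phi> t0"] positive) auto
qed (use that[of 1] in auto)

lemma power_bound_near_0:
  assumes "k = Suc L" "n \<le> L"
  obtains \<epsilon> K where "0 < \<epsilon>" "\<epsilon> \<le> 1/2" "\<And>t. t \<in> {0<..\<epsilon>} \<Longrightarrow> \<bar>nderiv n \<phi> t\<bar> ^ L \<le> K * \<phi> t ^ (L - n)"
proof (rule endpoint_power_bound[of "1/2" L "\<lambda>j. nderiv j \<phi>" n])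
  show "finite {s \<in> {0..1/2}. nderiv (Suc L) \<phi> s = 0}"
    by (rule finite_subset[OF _ finite_zeros]) (auto simp: assms)
qed (use assms that in \<open>auto intro: has_deriv continuous vanish_off_interior positive\<close>)

lemma power_bound_near_1:
  assumes "k = Suc L" "n \<le> L"
  obtains \<epsilon> K where "0 < \<epsilon>" "\<epsilon> \<le> 1/2"
    "\<And>t. t \<in> {0<..\<epsilon>} \<Longrightarrow> \<bar>nderiv n \<phi> (1 - t)\<bar> ^ L \<le> K * \<phi> (1 - t) ^ (L - n)"
proof -
  define f where "f j s = (-1) ^ j * nderiv j \<phi> (1 - s)" for j s
  have f_deriv: "(f j has_real_derivative f (Suc j) s) (at s)" if "j \<le> L" for j s
    unfolding f_def using that assms(1)
    by (auto intro!: derivative_eq_intros DERIV_chain2[OF has_deriv])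
  have "{s \<in> {0..1/2}. f k s = 0} \<subseteq> (\<lambda>t. 1 - t) ` {t \<in> {0..1}. nderiv k \<phi> t = 0}"
  proof
    fix s assume "s \<in> {s \<in> {0..1/2}. f k s = 0}"
    then have "1 - s \<in> {t \<in> {0..1}. nderiv k \<phi> t = 0}" by (simp add: f_def)
    then show "s \<in> (\<lambda>t. 1 - t) ` {t \<in> {0..1}. nderiv k \<phi> t = 0}" by (rule image_eqI[rotated]) simp
  qed
  then have f_zeros: "finite {s \<in> {0..1/2}. f (Suc L) s = 0}"
    using finite_subset finite_zeros assms(1) by blast
  have f_continuous: "continuous_on {0..1/2} (f (Suc L))"
    unfolding f_def assms(1)[symmetric]
    by (intro continuous_intros continuous_on_compose2[OF continuous[of k]]) auto
  have f_vanish: "f j 0 = 0" if "j \<le> L" for j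
    using that assms(1) by (simp add: f_def vanish_off_interior)
  have f_pos: "0 < f 0 s" if "s \<in> {0<..1/2}" for s
    using that by (simp add: f_def positive)
  obtain \<epsilon> K where "0 < \<epsilon>" "\<epsilon> \<le> 1/2" "\<And>t. t \<in> {0<..\<epsilon>} \<Longrightarrow> \<bar>f n t\<bar> ^ L \<le> K * f 0 t ^ (L - n)"
    using endpoint_power_bound[of "1/2" L f, OF _ f_deriv f_vanish f_continuous f_zeros f_pos assms(2)]
    by auto
  then show ?thesis by (intro that) (auto simp: f_def abs_mult)
qed

lemma power_bound_on_unit:
  assumes "k = Suc L" "n < L"
  obtains K where "0 \<le> K" "\<And>t. t \<in> {0..1} \<Longrightarrow> \<bar>nderiv n \<phi> t\<bar> ^ L \<le> K * \<phi> t ^ (L - n)"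
proof -
  obtain \<epsilon>0 K0 where \<epsilon>0: "0 < \<epsilon>0" "\<epsilon>0 \<le> 1/2"
    and K0: "\<And>t. t \<in> {0<..\<epsilon>0} \<Longrightarrow> \<bar>nderiv n \<phi> t\<bar> ^ L \<le> K0 * \<phi> t ^ (L - n)"
    using power_bound_near_0[OF assms(1), of n] assms(2) by auto
  obtain \<epsilon>1 K1 where \<epsilon>1: "0 < \<epsilon>1" "\<epsilon>1 \<le> 1/2"
    and K1: "\<And>t. t \<in> {0<..\<epsilon>1} \<Longrightarrow> \<bar>nderiv n \<phi> (1 - t)\<bar> ^ L \<le> K1 * \<phi> (1 - t) ^ (L - n)"
    using power_bound_near_1[OF assms(1), of n] assms(2) by auto
  obtain c where "0 < c" and c: "\<And>t. t \<in> {\<epsilon>0..1 - \<epsilon>1} \<Longrightarrow> c \<le> \<phi> t"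
    using positive_lower_bound[of \<epsilon>0 "1 - \<epsilon>1"] \<epsilon>0 \<epsilon>1 by auto
  obtain B where B: "\<And>t. t \<in> {0..1} \<Longrightarrow> \<bar>nderiv n \<phi> t\<bar> \<le> B"
    using bounded_on_unit[of n] assms by auto
  have "0 \<le> B" using order_trans[OF abs_ge_zero B[of 0]] by simp
  define K where "K = max (max K0 K1) (B ^ L / c ^ (L - n))"
  have "0 \<le> K" using \<open>0 \<le> B\<close> \<open>0 < c\<close> by (simp add: K_def le_max_iff_disj)
  have "K0 \<le> K" "K1 \<le> K" "B ^ L / c ^ (L - n) \<le> K" by (simp_all add: K_def)
  have "\<bar>nderiv n \<phi> t\<bar> ^ L \<le> K * \<phi> t ^ (L - n)" if t: "t \<in> {0..1}" for t
  proof -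
    have "0 \<le> \<phi> t ^ (L - n)" using nonneg by simp
    consider "t \<in> {0<..\<epsilon>0}" | "1 - t \<in> {0<..\<epsilon>1}" | "t \<in> {\<epsilon>0..1 - \<epsilon>1}" | "t \<notin> {0<..<1}"
      using t by (cases "t \<in> {0<..<1}"; cases "t \<le> \<epsilon>0"; cases "1 - t \<le> \<epsilon>1") auto
    then show ?thesis
    proof cases
      case 1
      with K0 mult_right_mono[OF \<open>K0 \<le> K\<close> \<open>0 \<le> \<phi> t ^ (L - n)\<close>] show ?thesis
        by fastforce
    next
      case 2
      with K1[of "1 - t"] mult_right_mono[OF \<open>K1 \<le> K\<close> \<open>0 \<le> \<phi> t ^ (L - n)\<close>] show ?thesis
        by simp
    next
      case 3
      have "\<bar>nderiv n \<phi> t\<bar> ^ L \<le> B ^ L / c ^ (L - n) * c ^ (L - n)"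
        using B[OF t] \<open>0 < c\<close> by (simp add: power_mono)
      also have "\<dots> \<le> K * \<phi> t ^ (L - n)"
        using c[OF 3] \<open>0 < c\<close> \<open>0 \<le> K\<close> \<open>B ^ L / c ^ (L - n) \<le> K\<close>
        by (intro mult_mono power_mono) auto
      finally show ?thesis .
    next
      case 4
      with assms show ?thesis
        by (simp add: vanish_off_interior[of n t] vanish_off_interior[of 0 t, simplified] zero_power)
    qed
  qed
  with \<open>0 \<le> K\<close> show ?thesis using that by blast
qed

lemma quotient_L_infty:
  assumes "k = Suc L" "n < L" "0 < r" "real L \<le> r * (real L - real n)"
  shows "L_infty_on {0..1} (\<lambda>t. \<bar>nderiv n \<phi> t\<bar> / \<bar>\<phi> t\<bar> powr (1 / r))"
proof -
  obtain K where "0 \<le> K" and K: "\<And>t. t \<in> {0..1} \<Longrightarrow> \<bar>nderiv n \<phi> t\<bar> ^ L \<le> K * \<phi> t ^ (L - n)"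
    using power_bound_on_unit assms by blast
  obtain B where B: "\<And>t. t \<in> {0..1} \<Longrightarrow> \<bar>\<phi> t\<bar> \<le> B"
    using bounded_on_unit[of 0] by auto
  have [measurable]: "nderiv n \<phi> \<in> borel_measurable borel" "\<phi> \<in> borel_measurable borel"
    using measurable[of n] measurable[of 0] assms by simp_all
  show ?thesis
  proof (rule L_infty_on_if_bounded)
    show "(\<lambda>t. \<bar>nderiv n \<phi> t\<bar> / \<bar>\<phi> t\<bar> powr (1 / r)) \<in> borel_measurable borel"
      by measurable
    fix t :: real assume "t \<in> {0..1}"
    have "\<bar>\<phi> t\<bar> = \<phi> t" using nonneg by simp
    with B[OF \<open>t \<in> {0..1}\<close>] assms
    have "\<bar>nderiv n \<phi> t\<bar> / \<phi> t powr (1 / r)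
        \<le> K powr (1 / L) * max 1 B powr ((real L - real n) / L - 1 / r)"
      by (intro div_powr_le_of_power_le[OF abs_ge_zero nonneg _ \<open>0 \<le> K\<close> K[OF \<open>t \<in> {0..1}\<close>]]) auto
    with \<open>\<bar>\<phi> t\<bar> = \<phi> t\<close> show "\<bar>\<bar>nderiv n \<phi> t\<bar> / \<bar>\<phi> t\<bar> powr (1 / r)\<bar>
        \<le> K powr (1 / L) * max 1 B powr ((real L - real n) / L - 1 / r)"
      by simp
  qed
qed

lemma deriv_L_infty:
  assumes "n \<le> k"
  shows "L_infty_on {0..1} (\<lambda>t. \<bar>nderiv n \<phi> t\<bar>)"
proof -
  obtain B where "\<And>t. t \<in> {0..1} \<Longrightarrow> \<bar>nderiv n \<phi> t\<bar> \<le> B"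
    using bounded_on_unit[OF assms] by auto
  with measurable[OF assms] show ?thesis
    by (intro L_infty_on_if_bounded[of _ _ B]) auto
qed

end

theorem lemma4p5:
  fixes p :: ereal and m k :: nat and \<phi> :: "real \<Rightarrow> real"
  assumes p: "1 < p"
    and C: "C0k k \<phi>"
    and supp: "closure {x. \<phi> x \<noteq> 0} \<subseteq> {0..1}"
    and pos: "\<And>t. t \<in> {0<..<1} \<Longrightarrow> \<phi> t > 0"
    and k: "if p = \<infinity> then real k > real m + 1
            else real k > real m * real_of_ereal p / (real_of_ereal p - 1) + 1"
    and zeros: "finite {t \<in> {0..1}. nderiv k \<phi> t = 0}"
  shows "\<forall>n\<le>m. L_infty_on {0..1}
           (\<lambda>t. \<bar>nderiv n \<phi> t\<bar> /
                 (if p = \<infinity> then 1 else \<bar>\<phi> t\<bar> powr (1 / real_of_ereal p)))"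
proof (intro allI impI)
  interpret bump k \<phi> using C supp pos zeros by unfold_locales
  fix n assume "n \<le> m"
  show "L_infty_on {0..1} (\<lambda>t. \<bar>nderiv n \<phi> t\<bar> /
                 (if p = \<infinity> then 1 else \<bar>\<phi> t\<bar> powr (1 / real_of_ereal p)))"
  proof (cases "p = \<infinity>")
    case True
    with k \<open>n \<le> m\<close> have "n \<le> k" by simp
    with True show ?thesis using deriv_L_infty by simp
  next
    case False
    with p obtain r where r: "p = ereal r" "1 < r" by (cases p) auto
    with k False have "real m * r / (r - 1) + 1 < real k" by simp
    then obtain L where "k = Suc L" "n < L" "real L \<le> r * (real L - real n)"
      using exponent_condition \<open>1 < r\<close> \<open>n \<le> m\<close> by blast
    with r show ?thesis using quotient_L_infty by simp
  qed
qed

end
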